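(* Let $N\ge1$, $s\ge2$ be integers, $\epsilon=1/N$, $F>0$, and let $\phi:(0,\infty)\to\mathbb R$ be twice differentiable with $\phi''_{kF}:=\phi''(kF)$. Suppose $\phi''_{kF}\le0$ for $k=2,\dots,s$. Call $\mathbf y_F$ a stable equilibrium of the $s$th-nearest-neighbour atomistic model if $$\epsilon\sum_{\ell=-N+1}^{N}\sum_{k=1}^{s}\phi''_{kF}\Big(\sum_{j=0}^{k-1}u'_{\ell+j}\Big)^2>0\quad\text{for all }\mathbf u\in\mathcal U\setminus\{\mathbf 0\}.$$ Then there exists a constant $B=B_F$ satisfying $$\sum_{k=2}^{s}(k-1)\phi''_{kF}\ \ge\ B_F\ \ge\ \phi''_{2F}+\sum_{k=3}^{s}\frac{k^4-k^2}{12}\phi''_{kF}$$ such that $\mathbf y_F$ is a stable equilibrium of the atomistic model if and only if $A^s_F-\epsilon^2\mu_\epsilon^2B_F>0$, where $A^s_F:=\sum_{k=1}^{s}k^2\phi''_{kF}$.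
   Context: $\mathcal{U}$ is the space of real sequences $\mathbf u=(u_\ell)_{\ell\in\mathbb{Z}}$ with $u_{\ell+2N}=u_\ell$ and $\sum_{\ell=-N+1}^{N}u_\ell=0$; $(\mathbf y_F)_\ell=F\epsilon\ell$. For a sequence $\mathbf v$, $v'_\ell=(v_\ell-v_{\ell-1})/\epsilon$, $v''_\ell=(v'_\ell-v'_{\ell-1})/\epsilon$. $\|\mathbf v\|_{\ell^2_\epsilon}=(\epsilon\sum_{\ell=-N+1}^N v_\ell^2)^{1/2}$. $\mu_\epsilon:=\inf_{\Psi\in\mathcal U\setminus\{\mathbf 0\}}\|\Psi''\|_{\ell^2_\epsilon}/\|\Psi'\|_{\ell^2_\epsilon}$, which equals $2\sin(\pi\epsilon/2)/\epsilon$. *)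

theory Defs
  imports "HOL-Analysis.Analysis"
begin

definition perU :: "nat \<Rightarrow> (int \<Rightarrow> real) set" where
  "perU N = {u. (\<forall>l. u (l + 2 * int N) = u l) \<and> (\<Sum>l=-int N+1..int N. u l) = 0}"

definition dq :: "real \<Rightarrow> (int \<Rightarrow> real) \<Rightarrow> (int \<Rightarrow> real)" where
  "dq eps v = (\<lambda>l. (v l - v (l - 1)) / eps)"

definition l2eps :: "nat \<Rightarrow> (int \<Rightarrow> real) \<Rightarrow> real" where
  "l2eps N v = sqrt ((1 / real N) * (\<Sum>l=-int N+1..int N. (v l)^2))"

definition mu_eps :: "nat \<Rightarrow> real" where
  "mu_eps N = Inf {l2eps N (dq (1 / real N) (dq (1 / real N) \<Psi>)) / l2eps N (dq (1 / real N) \<Psi>)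
                   | \<Psi>. \<Psi> \<in> perU N \<and> \<Psi> \<noteq> (\<lambda>_. 0)}"

text \<open>Stability of y_F for the s-th nearest neighbour atomistic model, where
  phi2 k stands for phi''(kF).\<close>
definition atom_stable :: "(nat \<Rightarrow> real) \<Rightarrow> nat \<Rightarrow> nat \<Rightarrow> bool" where
  "atom_stable phi2 N s \<longleftrightarrow>
     (\<forall>u \<in> perU N. u \<noteq> (\<lambda>_. 0) \<longrightarrow>
        (1 / real N) * (\<Sum>l=-int N+1..int N. \<Sum>k=1..s.
            phi2 k * (\<Sum>j=0..<k. dq (1 / real N) u (l + int j))^2) > 0)"

end

theory Submission
  imports Defs
begin

text \<open>Put w = u'. Expanding the square, the k-th block energy
  \<Sum>_l (w_l + ... + w_(l+k-1))^2 equals k^2 \<Sum>_l w_l^2 - \<Sum>_(j<k) (k - j) D_j with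
  D_j = \<Sum>_l (w_(l+j) - w_l)^2, and 0 \<le> D_j \<le> j^2 D_1 by telescoping and Cauchy-Schwarz.
  Since \<phi>''(kF) \<le> 0 for k \<ge> 2, the quadratic form of the atomistic model therefore lies between
  A \<Sum> w^2 - U D_1 and A \<Sum> w^2 - L D_1, where U and L are the upper and lower bound for B in
  the theorem. The ratio D_1 / \<Sum> w^2 = \<epsilon>^2 \<parallel>u''\<parallel>^2 / \<parallel>u'\<parallel>^2 attains its infimum \<epsilon>^2 \<mu>_\<epsilon>^2 by
  compactness of the unit sphere of the finite-dimensional space U. If the model is stable,
  the upper estimate at a minimiser gives A - \<epsilon>^2 \<mu>_\<epsilon>^2 L > 0, so B = L works; otherwise
  A - \<epsilon>^2 \<mu>_\<epsilon>^2 U \<le> 0, because the lower estimate and U \<le> 0 would give stability, so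
  B = U works.\<close>

section \<open>Sums over one period\<close>

definition periodic :: "nat \<Rightarrow> (int \<Rightarrow> real) \<Rightarrow> bool" where
  "periodic p g \<longleftrightarrow> (\<forall>l. g (l + int p) = g l)"

definition window_sum :: "nat \<Rightarrow> int \<Rightarrow> (int \<Rightarrow> real) \<Rightarrow> real" where
  "window_sum p a g = (\<Sum>i<p. g (a + int i))"

lemma window_sum_shift:
  assumes "periodic p g" shows "window_sum p a g = window_sum p b g"
proof -
  have step: "window_sum p (c + 1) g = window_sum p c g" for c
  proof -
    have "(\<Sum>i<Suc p. g (c + int i)) = g c + (\<Sum>i<p. g (c + 1 + int i))"
      by (subst sum.lessThan_Suc_shift) (simp add: algebra_simps)
    moreover have "(\<Sum>i<Suc p. g (c + int i)) = (\<Sum>i<p. g (c + int i)) + g (c + int p)"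
      by simp
    ultimately show ?thesis using assms by (simp add: window_sum_def periodic_def)
  qed
  have "window_sum p c g = window_sum p 0 g" for c
  proof (induct c rule: int_induct[where k=0])
    case (step1 i) then show ?case using step[of i] by simp
  next
    case (step2 i) then show ?case using step[of "i - 1"] by simp
  qed simp
  then show ?thesis by metis
qed

lemma periodic_add_mult:
  assumes "periodic p g" shows "g (l + int p * k) = g l"
proof (induct k rule: int_induct[where k=0])
  case (step1 i)
  have "g (l + int p * (i + 1)) = g (l + int p * i)"
    using assms[unfolded periodic_def, rule_format, of "l + int p * i"]
    by (simp add: algebra_simps)
  then show ?case using step1 by simp
next
  case (step2 i)
  have "g (l + int p * i) = g (l + int p * (i - 1))"
    using assms[unfolded periodic_def, rule_format, of "l + int p * (i - 1)"]
    by (simp add: algebra_simps)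
  then show ?case using step2 by simp
qed simp

lemma periodic_value_in_window:
  assumes "periodic p g" "p > 0"
  obtains i where "i < p" "g l = g (a + int i)"
proof -
  define r where "r = (l - a) mod int p"
  have r: "0 \<le> r" "r < int p" using assms(2) by (auto simp: r_def)
  have "l = (a + r) + int p * ((l - a) div int p)" unfolding r_def
    by (metis add.commute add.left_commute diff_add_cancel mod_mult_div_eq)
  then have "g l = g (a + r)"
    using periodic_add_mult[OF assms(1), of "a + r"] by metis
  then have "g l = g (a + int (nat r))" using r by simp
  then show ?thesis using that r by (metis nat_less_iff)
qed

lemma sum_symmetric_period:
  "(\<Sum>l=-int N+1..int N. f l) = window_sum (2*N) (-int N+1) f"
proof -
  have "{-int N+1..int N} = (\<lambda>i. -int N+1+int i) ` {..<2*N}"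
  proof
    show "{-int N+1..int N} \<subseteq> (\<lambda>i. -int N+1+int i) ` {..<2*N}"
    proof
      fix l assume "l \<in> {-int N+1..int N}"
      then have "l = -int N+1+int (nat (l + int N - 1))" "nat (l + int N - 1) < 2*N" by auto
      then show "l \<in> (\<lambda>i. -int N+1+int i) ` {..<2*N}" by blast
    qed
  qed auto
  moreover have "inj_on (\<lambda>i. -int N+1+int i) {..<2*N}" by (auto simp: inj_on_def)
  ultimately show ?thesis unfolding window_sum_def by (simp add: sum.reindex)
qed

lemma window_sum_add: "window_sum p a (\<lambda>l. f l + g l) = window_sum p a f + window_sum p a g"
  by (simp add: window_sum_def sum.distrib)

lemma window_sum_diff: "window_sum p a (\<lambda>l. f l - g l) = window_sum p a f - window_sum p a g"
  by (simp add: window_sum_def sum_subtractf)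

lemma window_sum_cmult: "window_sum p a (\<lambda>l. c * f l) = c * window_sum p a f"
  by (simp add: window_sum_def sum_distrib_left)

lemma window_sum_sum: "window_sum p a (\<lambda>l. \<Sum>j\<in>J. f j l) = (\<Sum>j\<in>J. window_sum p a (f j))"
  unfolding window_sum_def by (rule sum.swap)

lemma window_sum_mono: "(\<And>l. f l \<le> g l) \<Longrightarrow> window_sum p a f \<le> window_sum p a g"
  unfolding window_sum_def by (rule sum_mono) auto

lemma window_sum_nonneg: "(\<And>l. 0 \<le> f l) \<Longrightarrow> 0 \<le> window_sum p a f"
  unfolding window_sum_def by (rule sum_nonneg) auto

lemma window_sum_translate:
  assumes "periodic p g" shows "window_sum p a (\<lambda>l. g (l + c)) = window_sum p a g"
proof -
  have "window_sum p a (\<lambda>l. g (l + c)) = window_sum p (a + c) g"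
    unfolding window_sum_def by (simp add: algebra_simps)
  also have "\<dots> = window_sum p a g" by (rule window_sum_shift[OF assms])
  finally show ?thesis .
qed

lemma periodic_comp2:
  assumes "periodic p w" shows "periodic p (\<lambda>l. f (w (l + c)) (w (l + d)))"
  using assms unfolding periodic_def by (metis add.commute add.left_commute)

lemma periodic_dq: "periodic p u \<Longrightarrow> periodic p (dq e u)"
  unfolding periodic_def dq_def by (metis add.commute add_diff_eq)

section \<open>Energies of a periodic sequence\<close>

definition autocorr :: "nat \<Rightarrow> int \<Rightarrow> (int \<Rightarrow> real) \<Rightarrow> nat \<Rightarrow> real" where
  "autocorr p a w j = window_sum p a (\<lambda>l. w l * w (l + int j))"

definition block_energy :: "nat \<Rightarrow> int \<Rightarrow> (int \<Rightarrow> real) \<Rightarrow> nat \<Rightarrow> real" where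
  "block_energy p a w k = window_sum p a (\<lambda>l. (\<Sum>j<k. w (l + int j))\<^sup>2)"

definition incr_energy :: "nat \<Rightarrow> int \<Rightarrow> (int \<Rightarrow> real) \<Rightarrow> nat \<Rightarrow> real" where
  "incr_energy p a w j = window_sum p a (\<lambda>l. (w (l + int j) - w l)\<^sup>2)"

lemma incr_energy_nonneg: "0 \<le> incr_energy p a w j"
  unfolding incr_energy_def by (rule window_sum_nonneg) simp

lemma autocorr_0_nonneg: "0 \<le> autocorr p a w 0"
  unfolding autocorr_def by (rule window_sum_nonneg) simp

lemma autocorr_scale: "autocorr p a (\<lambda>l. c * w l) j = c\<^sup>2 * autocorr p a w j"
  unfolding autocorr_def window_sum_def
  by (simp add: sum_distrib_left power2_eq_square algebra_simps)

lemma incr_energy_scale: "incr_energy p a (\<lambda>l. c * w l) j = c\<^sup>2 * incr_energy p a w j"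
  unfolding incr_energy_def window_sum_def
  by (simp add: sum_distrib_left power2_eq_square algebra_simps)

lemma sum_of_nat_lessThan: "(\<Sum>j<k. real j) = real k * (real k - 1) / 2"
  by (induct k) (auto simp: field_simps)

lemma sum_of_nat_sq_lessThan: "(\<Sum>j<k. (real j)\<^sup>2) = real k * (real k - 1) * (2 * real k - 1) / 6"
  by (induct k) (auto simp: field_simps power2_eq_square)

lemma sum_weighted_sq_lessThan: "(\<Sum>j<k. (real k - real j) * (real j)\<^sup>2) = ((real k)^4 - (real k)\<^sup>2) / 12"
proof (induct k)
  case (Suc k)
  have "(\<Sum>j<Suc k. (real (Suc k) - real j) * (real j)\<^sup>2) =
     (\<Sum>j<k. (real k - real j) * (real j)\<^sup>2) + (\<Sum>j<Suc k. (real j)\<^sup>2)"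
    by (simp add: sum.distrib[symmetric] algebra_simps)
  then show ?case using Suc sum_of_nat_sq_lessThan[of "Suc k"]
    by (simp add: field_simps power2_eq_square power4_eq_xxxx)
qed simp

context
  fixes p :: nat and a :: int and w :: "int \<Rightarrow> real"
  assumes per: "periodic p w"
begin

lemma window_sum_sq_translate: "window_sum p a (\<lambda>l. (w (l + c))\<^sup>2) = autocorr p a w 0"
  using window_sum_translate[OF periodic_comp2[OF per, of "\<lambda>x y. x * y" 0 0], of a c]
  by (simp add: autocorr_def power2_eq_square)

lemma window_sum_cross_translate:
  assumes "j < k" shows "window_sum p a (\<lambda>l. w (l + int j) * w (l + int k)) = autocorr p a w (k - j)"
  using window_sum_translate[OF periodic_comp2[OF per, of "\<lambda>x y. x * y" 0 "int (k - j)"], of a "int j"]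
    assms by (simp add: autocorr_def algebra_simps of_nat_diff)

lemma block_energy_autocorr:
  "block_energy p a w k = 2 * (\<Sum>j<k. (real k - real j) * autocorr p a w j) - real k * autocorr p a w 0"
proof (induct k)
  case 0 then show ?case by (simp add: block_energy_def window_sum_def)
next
  case (Suc k)
  have "block_energy p a w (Suc k) = window_sum p a (\<lambda>l. (\<Sum>j<k. w (l + int j))\<^sup>2
          + 2 * (\<Sum>j<k. w (l + int j) * w (l + int k)) + (w (l + int k))\<^sup>2)"
    unfolding block_energy_def
    by (simp add: power2_eq_square algebra_simps sum_distrib_left sum_distrib_right)
  also have "\<dots> = block_energy p a w k + 2 * (\<Sum>j<k. autocorr p a w (k - j)) + autocorr p a w 0"
    by (simp add: window_sum_add window_sum_cmult window_sum_sum window_sum_cross_translate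
        window_sum_sq_translate block_energy_def)
  also have "(\<Sum>j<k. autocorr p a w (k - j)) = (\<Sum>j<Suc k. autocorr p a w j) - autocorr p a w 0"
  proof -
    have "(\<Sum>j<k. autocorr p a w (k - j)) = (\<Sum>j<k. autocorr p a w (Suc (k - Suc j)))"
      by (rule sum.cong) (auto simp: Suc_diff_Suc)
    also have "\<dots> = (\<Sum>j<k. autocorr p a w (Suc j))"
      by (rule sum.nat_diff_reindex[where g="\<lambda>j. autocorr p a w (Suc j)"])
    finally show ?thesis unfolding sum.lessThan_Suc_shift by simp
  qed
  also have "(\<Sum>j<Suc k. autocorr p a w j) = (\<Sum>j<Suc k. (real (Suc k) - real j) * autocorr p a w j)
      - (\<Sum>j<k. (real k - real j) * autocorr p a w j)"
    by (simp add: sum.distrib[symmetric] algebra_simps)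
  finally show ?case using Suc by (simp add: algebra_simps)
qed

lemma incr_energy_autocorr: "incr_energy p a w j = 2 * autocorr p a w 0 - 2 * autocorr p a w j"
proof -
  have "incr_energy p a w j
      = window_sum p a (\<lambda>l. (w (l + int j))\<^sup>2) - 2 * autocorr p a w j + autocorr p a w 0"
    unfolding incr_energy_def autocorr_def
    by (simp add: power2_eq_square algebra_simps window_sum_add window_sum_diff
        window_sum_cmult[symmetric])
  then show ?thesis using window_sum_sq_translate by simp
qed

lemma block_energy_incr_energy:
  "block_energy p a w k = (real k)\<^sup>2 * autocorr p a w 0 - (\<Sum>j<k. (real k - real j) * incr_energy p a w j)"
proof -
  have "(\<Sum>j<k. (real k - real j) * incr_energy p a w j) =
       (\<Sum>j<k. 2 * autocorr p a w 0 * (real k - real j) - 2 * ((real k - real j) * autocorr p a w j))"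
    by (rule sum.cong) (auto simp: incr_energy_autocorr algebra_simps)
  also have "\<dots> = 2 * autocorr p a w 0 * (\<Sum>j<k. real k - real j)
       - 2 * (\<Sum>j<k. (real k - real j) * autocorr p a w j)"
    by (subst sum_subtractf) (simp only: sum_distrib_left)
  also have "(\<Sum>j<k. real k - real j) = real k * (real k + 1) / 2"
    by (simp add: sum_subtractf sum_of_nat_lessThan field_simps)
  finally show ?thesis
    by (simp add: block_energy_autocorr algebra_simps power2_eq_square)
qed

lemma incr_energy_le: "incr_energy p a w j \<le> (real j)\<^sup>2 * incr_energy p a w 1"
proof -
  let ?d = "\<lambda>m. w (m + 1) - w m"
  have telescope: "w (l + int j) - w l = (\<Sum>i<j. ?d (l + int i))" for l
    using sum_lessThan_telescope[of "\<lambda>i. w (l + int i)" j] by (simp add: algebra_simps)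
  have translate: "window_sum p a (\<lambda>l. (w (l + int i + 1) - w (l + int i))\<^sup>2) = incr_energy p a w 1" for i
    using window_sum_translate[OF periodic_comp2[OF per, of "\<lambda>x y. (x - y)\<^sup>2" 1 0], of a "int i"]
    by (simp add: incr_energy_def algebra_simps)
  have "incr_energy p a w j = window_sum p a (\<lambda>l. (\<Sum>i<j. ?d (l + int i))\<^sup>2)"
    unfolding incr_energy_def telescope ..
  also have "\<dots> \<le> window_sum p a (\<lambda>l. real j * (\<Sum>i<j. (?d (l + int i))\<^sup>2))"
    by (rule window_sum_mono)
      (use sum_squared_le_sum_of_squares[of "\<lambda>i. ?d (_ + int i)" "{..<j}"] in \<open>simp add: mult.commute\<close>)
  also have "\<dots> = real j * (\<Sum>i<j. window_sum p a (\<lambda>l. (w (l + int i + 1) - w (l + int i))\<^sup>2))"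
    by (simp add: window_sum_cmult window_sum_sum)
  also have "\<dots> = (real j)\<^sup>2 * incr_energy p a w 1"
    by (simp only: translate) (simp add: power2_eq_square)
  finally show ?thesis .
qed

lemma block_energy_lower:
  "(real k)\<^sup>2 * autocorr p a w 0 - ((real k)^4 - (real k)\<^sup>2) / 12 * incr_energy p a w 1
     \<le> block_energy p a w k"
proof -
  have "(\<Sum>j<k. (real k - real j) * incr_energy p a w j)
      \<le> (\<Sum>j<k. (real k - real j) * ((real j)\<^sup>2 * incr_energy p a w 1))"
    by (rule sum_mono, rule mult_left_mono, rule incr_energy_le) auto
  also have "\<dots> = ((real k)^4 - (real k)\<^sup>2) / 12 * incr_energy p a w 1"
    using sum_weighted_sq_lessThan[of k]
    by (simp add: sum_distrib_right[symmetric] mult.assoc[symmetric])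
  finally show ?thesis using block_energy_incr_energy by simp
qed

lemma block_energy_upper:
  "block_energy p a w k \<le> (real k)\<^sup>2 * autocorr p a w 0 - (real k - 1) * incr_energy p a w 1"
proof (cases "k \<ge> 2")
  case True
  have "(real k - real 1) * incr_energy p a w 1 \<le> (\<Sum>j<k. (real k - real j) * incr_energy p a w j)"
    by (rule member_le_sum[of 1 "{..<k}" "\<lambda>j. (real k - real j) * incr_energy p a w j"])
       (use True in \<open>auto intro!: mult_nonneg_nonneg incr_energy_nonneg\<close>)
  then show ?thesis using block_energy_incr_energy by simp
next
  case False
  then have "k = 0 \<or> k = 1" by auto
  then show ?thesis using block_energy_incr_energy[of k] incr_energy_nonneg[of p a w] by auto
qed

lemma block_energy_1: "block_energy p a w 1 = autocorr p a w 0"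
  using block_energy_upper[of 1] block_energy_lower[of 1] by simp

end

text \<open>The bounds transfer from \<open>block_energy\<close> to the weighted sum because only the weight
  of \<open>k = 1\<close> may be positive, and \<open>block_energy\<close> is exact there.\<close>

lemma weighted_block_energy_bounds:
  fixes \<phi> :: "nat \<Rightarrow> real"
  assumes per: "periodic p w" and nonpos: "\<forall>k\<in>{2..s}. \<phi> k \<le> 0"
  shows "(\<Sum>k=1..s. (real k)\<^sup>2 * \<phi> k) * autocorr p a w 0
           - (\<Sum>k=1..s. (real k - 1) * \<phi> k) * incr_energy p a w 1
         \<le> (\<Sum>k=1..s. \<phi> k * block_energy p a w k)"
    and "(\<Sum>k=1..s. \<phi> k * block_energy p a w k)
         \<le> (\<Sum>k=1..s. (real k)\<^sup>2 * \<phi> k) * autocorr p a w 0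
           - (\<Sum>k=1..s. ((real k)^4 - (real k)\<^sup>2) / 12 * \<phi> k) * incr_energy p a w 1"
proof -
  have split: "(\<Sum>k=1..s. (real k)\<^sup>2 * \<phi> k) * autocorr p a w 0 - (\<Sum>k=1..s. c k * \<phi> k) * incr_energy p a w 1
      = (\<Sum>k=1..s. \<phi> k * ((real k)\<^sup>2 * autocorr p a w 0 - c k * incr_energy p a w 1))" for c
  proof -
    have "(\<Sum>k=1..s. (real k)\<^sup>2 * \<phi> k) * autocorr p a w 0 - (\<Sum>k=1..s. c k * \<phi> k) * incr_energy p a w 1
      = (\<Sum>k=1..s. (real k)\<^sup>2 * \<phi> k * autocorr p a w 0 - c k * \<phi> k * incr_energy p a w 1)"
      by (simp only: sum_subtractf sum_distrib_right)
    then show ?thesis by (simp add: algebra_simps)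
  qed
  have lower_termwise: "\<phi> k * ((real k)\<^sup>2 * autocorr p a w 0 - c * incr_energy p a w 1) \<le> \<phi> k * block_energy p a w k"
    if "k \<in> {1..s}" and "k \<noteq> 1 \<Longrightarrow> block_energy p a w k \<le> (real k)\<^sup>2 * autocorr p a w 0 - c * incr_energy p a w 1"
    and "k = 1 \<Longrightarrow> c = 0" for k c
  proof (cases "k = 1")
    case False
    then show ?thesis using that nonpos by (intro mult_left_mono_neg) auto
  qed (use that block_energy_1[OF per] in simp)
  have upper_termwise: "\<phi> k * block_energy p a w k \<le> \<phi> k * ((real k)\<^sup>2 * autocorr p a w 0 - c * incr_energy p a w 1)"
    if "k \<in> {1..s}" and "k \<noteq> 1 \<Longrightarrow> (real k)\<^sup>2 * autocorr p a w 0 - c * incr_energy p a w 1 \<le> block_energy p a w k"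
    and "k = 1 \<Longrightarrow> c = 0" for k c
  proof (cases "k = 1")
    case False
    then show ?thesis using that nonpos by (intro mult_left_mono_neg) auto
  qed (use that block_energy_1[OF per] in simp)
  show "(\<Sum>k=1..s. (real k)\<^sup>2 * \<phi> k) * autocorr p a w 0
           - (\<Sum>k=1..s. (real k - 1) * \<phi> k) * incr_energy p a w 1
         \<le> (\<Sum>k=1..s. \<phi> k * block_energy p a w k)"
    unfolding split by (rule sum_mono, rule lower_termwise) (use block_energy_upper[OF per, of a] in auto)
  show "(\<Sum>k=1..s. \<phi> k * block_energy p a w k)
         \<le> (\<Sum>k=1..s. (real k)\<^sup>2 * \<phi> k) * autocorr p a w 0
           - (\<Sum>k=1..s. ((real k)^4 - (real k)\<^sup>2) / 12 * \<phi> k) * incr_energy p a w 1"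
    unfolding split by (rule sum_mono, rule upper_termwise) (use block_energy_lower[OF per, of _ a] in auto)
qed

section \<open>A minimiser of the difference-quotient ratio\<close>

definition normalized_seqs :: "nat \<Rightarrow> int \<Rightarrow> (int \<Rightarrow> real) set" where
  "normalized_seqs p a =
     {\<Psi>. periodic p \<Psi> \<and> window_sum p a \<Psi> = 0 \<and> window_sum p a (\<lambda>l. (\<Psi> l)\<^sup>2) = 1}"

text \<open>For p = 2N and e = \<epsilon> this is \<epsilon>^2 \<parallel>u''\<parallel>^2 / \<parallel>u'\<parallel>^2, see \<open>l2eps_ratio\<close>.\<close>

definition rayleigh_quot :: "nat \<Rightarrow> int \<Rightarrow> real \<Rightarrow> (int \<Rightarrow> real) \<Rightarrow> real" where
  "rayleigh_quot p a e u = incr_energy p a (dq e u) 1 / autocorr p a (dq e u) 0"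

lemma continuous_on_coordinate [continuous_intros]: "continuous_on S (\<lambda>x::int \<Rightarrow> real. x i)"
  by (rule continuous_on_subset[OF continuous_on_product_coordinates]) simp

lemma compact_PiE_cube: "compact (Pi\<^sub>E UNIV (\<lambda>_::int. {-1..1::real}))"
proof -
  have "compactin (product_topology (\<lambda>_. euclidean) UNIV) (Pi\<^sub>E UNIV (\<lambda>_::int. {-1..1::real}))"
    by (subst compactin_PiE) auto
  then show ?thesis by (simp add: euclidean_product_topology)
qed

lemma closed_normalized_seqs: "closed (normalized_seqs p a)"
proof -
  have "normalized_seqs p a = (\<Inter>l. {\<Psi>. \<Psi> (l + int p) = \<Psi> l}) \<inter> {\<Psi>. window_sum p a \<Psi> = 0}
     \<inter> {\<Psi>. window_sum p a (\<lambda>l. (\<Psi> l)\<^sup>2) = 1}"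
    by (auto simp: normalized_seqs_def periodic_def)
  then show ?thesis unfolding window_sum_def
    by (simp only:) (intro closed_Int closed_INT ballI closed_Collect_eq continuous_intros)
qed

lemma sq_le_window_sum_sq:
  assumes "periodic p u" "p > 0"
  shows "(u l)\<^sup>2 \<le> window_sum p a (\<lambda>l. (u l)\<^sup>2)"
proof -
  obtain i where i: "i < p" "u l = u (a + int i)" using periodic_value_in_window[OF assms] .
  have "(u (a + int i))\<^sup>2 \<le> window_sum p a (\<lambda>l. (u l)\<^sup>2)"
    unfolding window_sum_def using i(1)
    by (intro member_le_sum[of i "{..<p}" "\<lambda>i. (u (a + int i))\<^sup>2"]) auto
  then show ?thesis using i by simp
qed

lemma compact_normalized_seqs:
  assumes "p > 0" shows "compact (normalized_seqs p a)"
proof -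
  have "normalized_seqs p a \<subseteq> Pi\<^sub>E UNIV (\<lambda>_::int. {-1..1::real})"
  proof
    fix \<Psi> assume \<Psi>: "\<Psi> \<in> normalized_seqs p a"
    have "(\<Psi> l)\<^sup>2 \<le> 1" for l
      using sq_le_window_sum_sq[OF _ assms, of \<Psi> l a] \<Psi> by (simp add: normalized_seqs_def)
    then show "\<Psi> \<in> Pi\<^sub>E UNIV (\<lambda>_::int. {-1..1::real})"
      by (auto simp: abs_square_le_1 abs_le_iff)
  qed
  then have "normalized_seqs p a = Pi\<^sub>E UNIV (\<lambda>_::int. {-1..1::real}) \<inter> normalized_seqs p a"
    by blast
  then show ?thesis using compact_Int_closed[OF compact_PiE_cube closed_normalized_seqs] by metis
qed

lemma alternating_in_normalized_seqs:
  assumes "p > 0" "even p"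
  shows "(\<lambda>l. (if even l then 1 else -1) / sqrt (real p)) \<in> normalized_seqs p a"
    (is "?alt \<in> _")
proof -
  have per: "periodic p ?alt" using assms(2) unfolding periodic_def by auto
  have "window_sum p (a + 1) ?alt = (\<Sum>i<p. - ?alt (a + int i))"
    unfolding window_sum_def by (rule sum.cong) auto
  then have "window_sum p (a + 1) ?alt = - window_sum p a ?alt"
    by (simp add: window_sum_def sum_negf)
  then have "window_sum p a ?alt = 0" using window_sum_shift[OF per, of "a + 1" a] by simp
  moreover have "window_sum p a (\<lambda>l. (?alt l)\<^sup>2) = (\<Sum>i<p. 1 / real p)"
    unfolding window_sum_def by (rule sum.cong) (auto simp: power_divide)
  then have "window_sum p a (\<lambda>l. (?alt l)\<^sup>2) = 1" using assms(1) by simp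
  ultimately show ?thesis using per by (simp add: normalized_seqs_def)
qed

lemma normalized_seqs_nonzero: "\<Psi> \<in> normalized_seqs p a \<Longrightarrow> \<Psi> \<noteq> (\<lambda>_. 0)"
  by (auto simp: normalized_seqs_def window_sum_def)

lemma normalize_in_normalized_seqs:
  assumes "periodic p u" "window_sum p a u = 0" "u \<noteq> (\<lambda>_. 0)" "p > 0"
  obtains c :: real where "c \<noteq> 0" "(\<lambda>l. c * u l) \<in> normalized_seqs p a"
proof -
  obtain l where "u l \<noteq> 0" using assms(3) by auto
  then have "0 < (u l)\<^sup>2" by simp
  then have pos: "0 < window_sum p a (\<lambda>l. (u l)\<^sup>2)"
    using sq_le_window_sum_sq[OF assms(1,4), of l a] by linarith
  define c where "c = 1 / sqrt (window_sum p a (\<lambda>l. (u l)\<^sup>2))"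
  have "window_sum p a (\<lambda>l. (c * u l)\<^sup>2) = c\<^sup>2 * window_sum p a (\<lambda>l. (u l)\<^sup>2)"
    unfolding power_mult_distrib by (rule window_sum_cmult)
  then have "window_sum p a (\<lambda>l. (c * u l)\<^sup>2) = 1"
    using pos by (simp add: c_def power_divide)
  moreover have "periodic p (\<lambda>l. c * u l)" using assms(1) by (simp add: periodic_def)
  ultimately have "(\<lambda>l. c * u l) \<in> normalized_seqs p a"
    using assms(2) by (simp add: normalized_seqs_def window_sum_cmult)
  moreover have "c \<noteq> 0" using pos by (simp add: c_def)
  ultimately show ?thesis using that by blast
qed

text \<open>A nonzero sequence of zero mean is not constant, so its difference quotient is nonzero.\<close>

lemma autocorr_dq_pos:
  assumes per: "periodic p u" and "p > 0" "e \<noteq> 0" and "window_sum p a u = 0"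
    and "u \<noteq> (\<lambda>_. 0)"
  shows "0 < autocorr p a (dq e u) 0"
proof (rule ccontr)
  assume "\<not> 0 < autocorr p a (dq e u) 0"
  then have "(\<Sum>i<p. (dq e u (a + int i))\<^sup>2) = 0"
    using autocorr_0_nonneg[of p a "dq e u"]
    by (simp add: autocorr_def window_sum_def power2_eq_square)
  then have "\<forall>i<p. (dq e u (a + int i))\<^sup>2 = 0"
    by (subst (asm) sum_nonneg_eq_0_iff) auto
  then have step: "u (a + int i) = u (a + int i - 1)" if "i < p" for i
    using that \<open>e \<noteq> 0\<close> by (auto simp: dq_def)
  have window_const: "i \<le> p \<Longrightarrow> u (a - 1 + int i) = u (a - 1)" for i
  proof (induct i)
    case (Suc i)
    then show ?case using step[of i] by (simp add: algebra_simps)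
  qed simp
  have const: "u l = u (a - 1)" for l
  proof -
    obtain i where "i < p" "u l = u (a - 1 + int i)" using periodic_value_in_window[OF per \<open>p > 0\<close>] .
    then show ?thesis using window_const by simp
  qed
  then have "window_sum p a u = (\<Sum>i<p. u (a - 1))"
    unfolding window_sum_def by (intro sum.cong refl) (rule const)
  then have "window_sum p a u = real p * u (a - 1)" by simp
  then have "u = (\<lambda>_. 0)" using assms(2,4) const by auto
  then show False using assms(5) by simp
qed

lemma rayleigh_quot_scale: "c \<noteq> 0 \<Longrightarrow> rayleigh_quot p a e (\<lambda>l. c * u l) = rayleigh_quot p a e u"
proof -
  have "dq e (\<lambda>l. c * u l) = (\<lambda>l. c * dq e u l)" unfolding dq_def by (auto simp: algebra_simps)
  moreover assume "c \<noteq> 0"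
  ultimately show ?thesis by (simp add: rayleigh_quot_def autocorr_scale incr_energy_scale)
qed

lemma continuous_on_rayleigh_quot:
  assumes "p > 0" "e \<noteq> 0"
  shows "continuous_on (normalized_seqs p a) (rayleigh_quot p a e)"
  unfolding rayleigh_quot_def
proof (intro continuous_on_divide ballI)
  show "continuous_on (normalized_seqs p a) (\<lambda>\<Psi>. autocorr p a (dq e \<Psi>) 0)"
    unfolding autocorr_def window_sum_def dq_def using assms(2) by (intro continuous_intros) auto
  show "continuous_on (normalized_seqs p a) (\<lambda>\<Psi>. incr_energy p a (dq e \<Psi>) 1)"
    unfolding incr_energy_def window_sum_def dq_def using assms(2) by (intro continuous_intros) auto
  show "autocorr p a (dq e \<Psi>) 0 \<noteq> 0" if "\<Psi> \<in> normalized_seqs p a" for \<Psi>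
    using autocorr_dq_pos[OF _ assms] normalized_seqs_nonzero[OF that] that
    by (fastforce simp: normalized_seqs_def)
qed

lemma rayleigh_quot_attains_min:
  assumes "p > 0" "even p" "e \<noteq> 0"
  obtains \<Psi>0 where "\<Psi>0 \<in> normalized_seqs p a"
    "\<And>u. periodic p u \<Longrightarrow> window_sum p a u = 0 \<Longrightarrow> u \<noteq> (\<lambda>_. 0)
       \<Longrightarrow> rayleigh_quot p a e \<Psi>0 \<le> rayleigh_quot p a e u"
proof -
  obtain \<Psi>0 where \<Psi>0: "\<Psi>0 \<in> normalized_seqs p a"
      "\<forall>v\<in>normalized_seqs p a. rayleigh_quot p a e \<Psi>0 \<le> rayleigh_quot p a e v"
    using continuous_attains_inf[OF compact_normalized_seqs[OF assms(1)] _
        continuous_on_rayleigh_quot[OF assms(1,3)]]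
      alternating_in_normalized_seqs[OF assms(1,2)] by blast
  have "rayleigh_quot p a e \<Psi>0 \<le> rayleigh_quot p a e u"
    if u: "periodic p u" "window_sum p a u = 0" "u \<noteq> (\<lambda>_. 0)" for u
  proof -
    obtain c where "c \<noteq> 0" "(\<lambda>l. c * u l) \<in> normalized_seqs p a"
      using normalize_in_normalized_seqs[OF u assms(1)] .
    then show ?thesis using \<Psi>0(2) rayleigh_quot_scale by metis
  qed
  then show ?thesis using that \<Psi>0(1) by blast
qed

section \<open>The stability threshold\<close>

lemma threshold_between_bounds:
  fixes Q R D :: "'a \<Rightarrow> real"
  assumes "u0 \<in> X" and R_pos: "\<And>u. u \<in> X \<Longrightarrow> 0 < R u"
    and min: "\<And>u. u \<in> X \<Longrightarrow> D u0 / R u0 \<le> D u / R u"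
    and lower: "\<And>u. u \<in> X \<Longrightarrow> A * R u - U * D u \<le> Q u"
    and upper: "\<And>u. u \<in> X \<Longrightarrow> Q u \<le> A * R u - L * D u"
    and "L \<le> U" "U \<le> 0"
  obtains B where "U \<ge> B" "B \<ge> L" "(\<forall>u\<in>X. 0 < Q u) \<longleftrightarrow> 0 < A - D u0 / R u0 * B"
proof (cases "\<forall>u\<in>X. 0 < Q u")
  case True
  have "0 < Q u0" using True \<open>u0 \<in> X\<close> by blast
  also have "\<dots> \<le> R u0 * (A - D u0 / R u0 * L)"
    using upper[OF \<open>u0 \<in> X\<close>] R_pos[OF \<open>u0 \<in> X\<close>] by (simp add: algebra_simps)
  finally have "0 < A - D u0 / R u0 * L"
    using R_pos[OF \<open>u0 \<in> X\<close>] by (simp add: zero_less_mult_iff)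
  with True \<open>L \<le> U\<close> show ?thesis by (intro that[of L]) auto
next
  case False
  have "\<not> 0 < A - D u0 / R u0 * U"
  proof
    assume pos: "0 < A - D u0 / R u0 * U"
    have "0 < Q u" if "u \<in> X" for u
    proof -
      have "(- U) * (D u0 / R u0) \<le> (- U) * (D u / R u)"
        using min[OF that] \<open>U \<le> 0\<close> by (intro mult_left_mono) auto
      then have "0 < R u * (A - D u / R u * U)"
        using pos R_pos[OF that] by (intro mult_pos_pos) (auto simp: algebra_simps)
      also have "\<dots> \<le> Q u"
        using lower[OF that] R_pos[OF that] by (simp add: algebra_simps)
      finally show ?thesis .
    qed
    then show False using False by blast
  qed
  with False \<open>L \<le> U\<close> show ?thesis by (intro that[of U]) auto
qed

lemma quartic_weight_ge: "2 \<le> x \<Longrightarrow> x - 1 \<le> (x ^ 4 - x\<^sup>2) / (12::real)"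
proof -
  assume x: "2 \<le> x"
  have "4 * 3 \<le> x\<^sup>2 * (x + 1)"
    using x power_mono[OF x, of 2] by (intro mult_mono) auto
  then have "(x - 1) * 12 \<le> (x - 1) * (x\<^sup>2 * (x + 1))" using x by (intro mult_left_mono) auto
  then show ?thesis by (simp add: power2_eq_square power4_eq_xxxx algebra_simps)
qed

lemma threshold_weights_ordered:
  fixes \<phi> :: "nat \<Rightarrow> real"
  assumes nonpos: "\<forall>k\<in>{2..s}. \<phi> k \<le> 0"
  shows "(\<Sum>k=1..s. ((real k)^4 - (real k)\<^sup>2) / 12 * \<phi> k) \<le> (\<Sum>k=1..s. (real k - 1) * \<phi> k)"
    and "(\<Sum>k=1..s. (real k - 1) * \<phi> k) \<le> 0"
proof -
  have k2: "2 \<le> real k" "\<phi> k \<le> 0" if "k \<in> {1..s}" "k \<noteq> 1" for k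
    using that nonpos by auto
  show "(\<Sum>k=1..s. (real k - 1) * \<phi> k) \<le> 0"
  proof (rule sum_nonpos)
    show "(real k - 1) * \<phi> k \<le> 0" if "k \<in> {1..s}" for k
      using k2[OF that] by (cases "k = 1") (auto intro: mult_nonneg_nonpos)
  qed
  show "(\<Sum>k=1..s. ((real k)^4 - (real k)\<^sup>2) / 12 * \<phi> k) \<le> (\<Sum>k=1..s. (real k - 1) * \<phi> k)"
  proof (rule sum_mono)
    show "((real k)^4 - (real k)\<^sup>2) / 12 * \<phi> k \<le> (real k - 1) * \<phi> k" if "k \<in> {1..s}" for k
    proof (cases "k = 1")
      case False
      then show ?thesis using k2[OF that False] by (intro mult_right_mono_neg quartic_weight_ge)
    qed simp
  qed
qed

section \<open>Back to the atomistic model\<close>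

lemma perU_iff: "u \<in> perU N \<longleftrightarrow> periodic (2*N) u \<and> window_sum (2*N) (-int N+1) u = 0"
  unfolding perU_def periodic_def sum_symmetric_period by simp

lemma l2eps_window_sum: "l2eps N v = sqrt (window_sum (2*N) (-int N+1) (\<lambda>l. (v l)\<^sup>2) / real N)"
  unfolding l2eps_def sum_symmetric_period by simp

lemma l2eps_ratio:
  assumes N: "N \<ge> 1" and u: "u \<in> perU N" "u \<noteq> (\<lambda>_. 0)"
  shows "l2eps N (dq (1/real N) (dq (1/real N) u)) / l2eps N (dq (1/real N) u)
         = real N * sqrt (rayleigh_quot (2*N) (-int N+1) (1/real N) u)"
proof -
  let ?p = "2*N" and ?a = "-int N+1" and ?e = "1/real N"
  define w where "w = dq ?e u"
  have per: "periodic ?p u" "window_sum ?p ?a u = 0" using u perU_iff by auto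
  have pw: "periodic ?p w" unfolding w_def by (rule periodic_dq[OF per(1)])
  have R0: "0 < autocorr ?p ?a w 0"
    unfolding w_def using autocorr_dq_pos[OF per(1) _ _ per(2) u(2)] N by simp
  have "window_sum ?p ?a (\<lambda>l. (w l - w (l - 1))\<^sup>2)
      = window_sum ?p ?a (\<lambda>l. (w (l + -1 + 1) - w (l + -1 + 0))\<^sup>2)"
    by simp
  also have "\<dots> = window_sum ?p ?a (\<lambda>l. (w (l + 1) - w (l + 0))\<^sup>2)"
    by (rule window_sum_translate[OF periodic_comp2[OF pw, of "\<lambda>x y. (x - y)\<^sup>2" 1 0]])
  also have "\<dots> = incr_energy ?p ?a w 1" by (simp add: incr_energy_def)
  finally have D1: "window_sum ?p ?a (\<lambda>l. (w l - w (l - 1))\<^sup>2) = incr_energy ?p ?a w 1" .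
  have dq_w: "dq ?e w = (\<lambda>l. real N * (w l - w (l - 1)))" unfolding dq_def by (simp add: mult.commute)
  have "l2eps N (dq ?e w) = sqrt ((real N)\<^sup>2 * incr_energy ?p ?a w 1 / real N)"
    unfolding l2eps_window_sum dq_w power_mult_distrib window_sum_cmult D1 ..
  moreover have "l2eps N w = sqrt (autocorr ?p ?a w 0 / real N)"
    unfolding l2eps_window_sum autocorr_def by (simp add: power2_eq_square)
  ultimately have "l2eps N (dq ?e w) / l2eps N w
      = sqrt (((real N)\<^sup>2 * incr_energy ?p ?a w 1 / real N) / (autocorr ?p ?a w 0 / real N))"
    by (simp add: real_sqrt_divide)
  also have "((real N)\<^sup>2 * incr_energy ?p ?a w 1 / real N) / (autocorr ?p ?a w 0 / real N)
      = (real N)\<^sup>2 * (incr_energy ?p ?a w 1 / autocorr ?p ?a w 0)"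
    using N R0 by (simp add: field_simps)
  also have "sqrt \<dots> = real N * sqrt (incr_energy ?p ?a w 1 / autocorr ?p ?a w 0)"
    by (subst real_sqrt_mult) simp
  finally show ?thesis unfolding w_def rayleigh_quot_def .
qed

lemma mu_eps_sq_attained:
  assumes N: "N \<ge> 1"
  obtains \<Psi>0 where "\<Psi>0 \<in> perU N - {\<lambda>_. 0}"
    "(1 / real N)\<^sup>2 * (mu_eps N)\<^sup>2 = rayleigh_quot (2*N) (-int N+1) (1/real N) \<Psi>0"
    "\<And>u. u \<in> perU N - {\<lambda>_. 0} \<Longrightarrow>
       rayleigh_quot (2*N) (-int N+1) (1/real N) \<Psi>0 \<le> rayleigh_quot (2*N) (-int N+1) (1/real N) u"
proof -
  let ?g = "rayleigh_quot (2*N) (-int N+1) (1/real N)"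
  let ?ratios = "{l2eps N (dq (1 / real N) (dq (1 / real N) \<Psi>)) / l2eps N (dq (1 / real N) \<Psi>)
                   | \<Psi>. \<Psi> \<in> perU N \<and> \<Psi> \<noteq> (\<lambda>_. 0)}"
  have "0 < 2 * N" "even (2 * N)" "1 / real N \<noteq> 0" using N by auto
  then obtain \<Psi>0 where \<Psi>0: "\<Psi>0 \<in> normalized_seqs (2*N) (-int N+1)"
    "\<And>u. periodic (2*N) u \<Longrightarrow> window_sum (2*N) (-int N+1) u = 0 \<Longrightarrow> u \<noteq> (\<lambda>_. 0)
       \<Longrightarrow> ?g \<Psi>0 \<le> ?g u"
    by (rule rayleigh_quot_attains_min[where a = "-int N+1"]) blast+
  have min: "?g \<Psi>0 \<le> ?g u" if "u \<in> perU N - {\<lambda>_. 0}" for u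
    using that \<Psi>0(2) by (simp add: perU_iff)
  have \<Psi>0_adm: "\<Psi>0 \<in> perU N - {\<lambda>_. 0}"
    using \<Psi>0(1) normalized_seqs_nonzero[OF \<Psi>0(1)] by (simp add: normalized_seqs_def perU_iff)
  have "mu_eps N = real N * sqrt (?g \<Psi>0)"
    unfolding mu_eps_def
  proof (rule cInf_eq_minimum)
    have "l2eps N (dq (1 / real N) (dq (1 / real N) \<Psi>0)) / l2eps N (dq (1 / real N) \<Psi>0)
        = real N * sqrt (?g \<Psi>0)"
      using \<Psi>0_adm by (intro l2eps_ratio[OF N]) auto
    then show "real N * sqrt (?g \<Psi>0) \<in> ?ratios" using \<Psi>0_adm by (intro CollectI exI[of _ \<Psi>0]) auto
  next
    fix x assume "x \<in> ?ratios"
    then obtain \<Psi> where \<Psi>: "\<Psi> \<in> perU N - {\<lambda>_. 0}"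
      and x: "x = l2eps N (dq (1 / real N) (dq (1 / real N) \<Psi>)) / l2eps N (dq (1 / real N) \<Psi>)"
      by blast
    have "x = real N * sqrt (?g \<Psi>)" unfolding x using \<Psi> by (intro l2eps_ratio[OF N]) auto
    then show "real N * sqrt (?g \<Psi>0) \<le> x" using min[OF \<Psi>] by (simp add: mult_left_mono)
  qed
  moreover have "0 \<le> ?g \<Psi>0"
    unfolding rayleigh_quot_def by (simp add: incr_energy_nonneg autocorr_0_nonneg)
  ultimately have "(1 / real N)\<^sup>2 * (mu_eps N)\<^sup>2 = ?g \<Psi>0"
    using N by (simp add: power_mult_distrib power_divide)
  from \<Psi>0_adm this min show ?thesis by (rule that)
qed

lemma atom_stable_iff_block_energy:
  assumes "N \<ge> 1"
  shows "atom_stable \<phi> N s \<longleftrightarrow> (\<forall>u \<in> perU N - {\<lambda>_. 0}.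
     0 < (\<Sum>k=1..s. \<phi> k * block_energy (2*N) (-int N+1) (dq (1/real N) u) k))"
proof -
  have "(\<Sum>l=-int N+1..int N. \<Sum>k=1..s. \<phi> k * (\<Sum>j=0..<k. w (l + int j))\<^sup>2)
      = (\<Sum>k=1..s. \<phi> k * block_energy (2*N) (-int N+1) w k)" for w
    unfolding sum_symmetric_period window_sum_sum
    by (rule sum.cong) (simp_all add: window_sum_cmult block_energy_def atLeast0LessThan)
  moreover have "0 < real N" using assms by simp
  ultimately show ?thesis unfolding atom_stable_def by (simp add: zero_less_divide_iff Ball_def imp_conjL)
qed

lemma perU_energy_estimates:
  fixes \<phi> :: "nat \<Rightarrow> real"
  assumes N: "N \<ge> 1" and u: "u \<in> perU N - {\<lambda>_. 0}" and nonpos: "\<forall>k\<in>{2..s}. \<phi> k \<le> 0"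
  shows "0 < autocorr (2*N) (-int N+1) (dq (1/real N) u) 0"
    and "(\<Sum>k=1..s. (real k)\<^sup>2 * \<phi> k) * autocorr (2*N) (-int N+1) (dq (1/real N) u) 0
           - (\<Sum>k=1..s. (real k - 1) * \<phi> k) * incr_energy (2*N) (-int N+1) (dq (1/real N) u) 1
         \<le> (\<Sum>k=1..s. \<phi> k * block_energy (2*N) (-int N+1) (dq (1/real N) u) k)"
    and "(\<Sum>k=1..s. \<phi> k * block_energy (2*N) (-int N+1) (dq (1/real N) u) k)
         \<le> (\<Sum>k=1..s. (real k)\<^sup>2 * \<phi> k) * autocorr (2*N) (-int N+1) (dq (1/real N) u) 0
           - (\<Sum>k=1..s. ((real k)^4 - (real k)\<^sup>2) / 12 * \<phi> k) * incr_energy (2*N) (-int N+1) (dq (1/real N) u) 1"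
proof -
  have per: "periodic (2*N) u" and mean: "window_sum (2*N) (-int N+1) u = 0"
    using u by (simp_all add: perU_iff)
  show "0 < autocorr (2*N) (-int N+1) (dq (1/real N) u) 0"
    using autocorr_dq_pos[OF per _ _ mean] u N by simp
  show "(\<Sum>k=1..s. (real k)\<^sup>2 * \<phi> k) * autocorr (2*N) (-int N+1) (dq (1/real N) u) 0
           - (\<Sum>k=1..s. (real k - 1) * \<phi> k) * incr_energy (2*N) (-int N+1) (dq (1/real N) u) 1
         \<le> (\<Sum>k=1..s. \<phi> k * block_energy (2*N) (-int N+1) (dq (1/real N) u) k)"
       "(\<Sum>k=1..s. \<phi> k * block_energy (2*N) (-int N+1) (dq (1/real N) u) k)
         \<le> (\<Sum>k=1..s. (real k)\<^sup>2 * \<phi> k) * autocorr (2*N) (-int N+1) (dq (1/real N) u) 0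
           - (\<Sum>k=1..s. ((real k)^4 - (real k)\<^sup>2) / 12 * \<phi> k) * incr_energy (2*N) (-int N+1) (dq (1/real N) u) 1"
    by (rule weighted_block_energy_bounds[OF periodic_dq[OF per] nonpos])+
qed

text \<open>Only the values \<open>\<phi>''(kF)\<close> enter the argument.\<close>

theorem theorem5p3:
  fixes N s :: nat and F :: real and phi :: "real \<Rightarrow> real"
  assumes "N \<ge> 1" and "s \<ge> 2" and "F > 0"
    and "\<forall>x>0. phi differentiable (at x)"
    and "\<forall>x>0. (deriv phi) differentiable (at x)"
    and "\<forall>k\<in>{2..s}. deriv (deriv phi) (real k * F) \<le> 0"
  shows "\<exists>B::real.
     (\<Sum>k=2..s. (real k - 1) * deriv (deriv phi) (real k * F)) \<ge> B \<and>
     B \<ge> deriv (deriv phi) (2 * F)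
          + (\<Sum>k=3..s. ((real k)^4 - (real k)^2) / 12 * deriv (deriv phi) (real k * F)) \<and>
     (atom_stable (\<lambda>k. deriv (deriv phi) (real k * F)) N s \<longleftrightarrow>
        (\<Sum>k=1..s. (real k)^2 * deriv (deriv phi) (real k * F))
          - (1 / real N)^2 * (mu_eps N)^2 * B > 0)"
proof -
  define \<phi> where "\<phi> = (\<lambda>k::nat. deriv (deriv phi) (real k * F))"
  define A where "A = (\<Sum>k=1..s. (real k)\<^sup>2 * \<phi> k)"
  define U where "U = (\<Sum>k=1..s. (real k - 1) * \<phi> k)"
  define L where "L = (\<Sum>k=1..s. ((real k)^4 - (real k)\<^sup>2) / 12 * \<phi> k)"
  let ?Q = "\<lambda>u. \<Sum>k=1..s. \<phi> k * block_energy (2*N) (-int N+1) (dq (1/real N) u) k"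
  let ?R = "\<lambda>u. autocorr (2*N) (-int N+1) (dq (1/real N) u) 0"
  let ?D = "\<lambda>u. incr_energy (2*N) (-int N+1) (dq (1/real N) u) 1"
  have nonpos: "\<forall>k\<in>{2..s}. \<phi> k \<le> 0" using assms(6) by (simp add: \<phi>_def)
  obtain \<Psi>0 where \<Psi>0: "\<Psi>0 \<in> perU N - {\<lambda>_. 0}" "(1 / real N)\<^sup>2 * (mu_eps N)\<^sup>2 = ?D \<Psi>0 / ?R \<Psi>0"
      "\<And>u. u \<in> perU N - {\<lambda>_. 0} \<Longrightarrow> ?D \<Psi>0 / ?R \<Psi>0 \<le> ?D u / ?R u"
    using mu_eps_sq_attained[OF assms(1)] unfolding rayleigh_quot_def by blast
  note estimates = perU_energy_estimates[OF assms(1) _ nonpos, folded A_def U_def L_def]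
  obtain B where B: "U \<ge> B" "B \<ge> L" "(\<forall>u \<in> perU N - {\<lambda>_. 0}. 0 < ?Q u) \<longleftrightarrow> 0 < A - ?D \<Psi>0 / ?R \<Psi>0 * B"
    by (rule threshold_between_bounds[where Q = ?Q and R = ?R and D = ?D, OF \<Psi>0(1) estimates(1) \<Psi>0(3)
          estimates(2,3) threshold_weights_ordered[OF nonpos, folded U_def L_def]])
  have U_eq: "U = (\<Sum>k=2..s. (real k - 1) * \<phi> k)"
    unfolding U_def using assms(2) by (simp add: sum.atLeast_Suc_atMost numeral_2_eq_2)
  have L_eq: "L = \<phi> 2 + (\<Sum>k=3..s. ((real k)^4 - (real k)\<^sup>2) / 12 * \<phi> k)"
    unfolding L_def using assms(2)
    by (simp add: sum.atLeast_Suc_atMost numeral_2_eq_2 numeral_3_eq_3)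
  have "atom_stable \<phi> N s \<longleftrightarrow> A - (1 / real N)\<^sup>2 * (mu_eps N)\<^sup>2 * B > 0"
    using B(3) unfolding atom_stable_iff_block_energy[OF assms(1)] \<Psi>0(2) .
  with B(1,2) show ?thesis unfolding U_eq L_eq A_def \<phi>_def
    by (intro exI[of _ B] conjI) (simp_all only: of_nat_numeral)
qed

end
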